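(* Normalize $\operatorname{var}(X)=1$ and $\operatorname{var}(W_1)=I_{d_1}$, suppose $\operatorname{var}(Y,X,W_1)$ is positive definite, and let $\|c\|<1$. Then $\mathcal B(r_X,0,c)=\{\beta_{\text{med}}\}$ if and only if there exists $p_1\in\mathbb R^{d_1}$ with $(I+cr_X')p_1=\sigma_{W_1,X}$ and $(p_1'r_X)^2(1-\|c\|^2)<k_0$. In particular, $\mathcal B(r_X,0,c)=\{\beta_{\text{med}}\}$ whenever $r_X'c\ne-1$ and $z_X(r_X,c)^2<k_0$.
   Context: For random vectors $A,B$ with $\operatorname{var}(B)$ invertible, $A^{\perp B}=A-\operatorname{cov}(A,B)\operatorname{var}(B)^{-1}B$. $\sigma_{A,B}=\operatorname{cov}(A,B)$. $\beta_{\text{med}}$ is the coefficient on $X$ in the linear projection of $Y$ on $(1,X,W_1)$. $k_0=\operatorname{var}(X^{\perp W_1})$; $z_X(r_X,c)=\frac{r_X'\sigma_{W_1,X}\sqrt{1-\|c\|^2}}{1+r_X'c}$. For $r_X,r_Y,c\in\mathbb R^{d_1}$, $\mathcal B(r_X,r_Y,c)$ is the set of $b\in\mathbb R$ such that for some $(p_1,g_1)\in\mathbb R^{d_1}\times\mathbb R^{d_1}$ (with $\Sigma_{\text{obs}}=\operatorname{var}(W_1)$): $\operatorname{cov}(Y,X)=b\operatorname{var}(X)+g_1'(\Sigma_{\text{obs}}+cr_X'+r_Yc'+r_Yr_X')p_1$; $\operatorname{cov}(Y,W_1)=b\operatorname{cov}(X,W_1)+g_1'(\Sigma_{\text{obs}}+r_Yc')$;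 $\operatorname{cov}(X,W_1)=p_1'(\Sigma_{\text{obs}}+r_Xc')$; $\operatorname{var}(Y)>b^2\operatorname{var}(X)+g_1'(\Sigma_{\text{obs}}+r_Yr_Y'+2r_Yc')g_1+2bg_1'(\Sigma_{\text{obs}}+cr_X'+r_Yc'+r_Yr_X')p_1$; $\operatorname{var}(X)>p_1'(\Sigma_{\text{obs}}+2r_Xc'+r_Xr_X')p_1$; $1>c'\Sigma_{\text{obs}}^{-1}c$. *)

theory Defs
  imports "HOL-Analysis.Analysis"
begin

text \<open>Second-moment data of the random vectors (Y, X, W1), with W1 of dimension CARD('n):
  vY = var(Y), vX = var(X), sYX = cov(Y,X), sYW = cov(Y,W1) (as a vector),
  sXW = cov(X,W1) = sigma_{W1,X} (as a vector), Sig = var(W1) = Sigma_obs.\<close>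

definition outer :: "real^'n \<Rightarrow> real^'n \<Rightarrow> real^'n^'n" where
  "outer a b = (\<chi> i j. a $ i * b $ j)"

text \<open>var(Y,X,W1) positive definite: the quadratic form of the joint covariance
  matrix is positive on every nonzero vector (a,b,v).\<close>
definition joint_var_posdef ::
  "real \<Rightarrow> real \<Rightarrow> real \<Rightarrow> real^'n \<Rightarrow> real^'n \<Rightarrow> real^'n^'n \<Rightarrow> bool" where
  "joint_var_posdef vY vX sYX sYW sXW Sig \<longleftrightarrow>
     (\<forall>a b (v::real^'n). (a, b, v) \<noteq> (0, 0, 0) \<longrightarrow>
        a^2 * vY + b^2 * vX + 2 * a * b * sYX + 2 * a * (v \<bullet> sYW) + 2 * b * (v \<bullet> sXW)
        + v \<bullet> (Sig *v v) > 0)"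

text \<open>beta_med: coefficient on X in the linear projection of Y on (1, X, W1),
  characterised by the normal equations (residual uncorrelated with X and W1).\<close>
definition beta_med ::
  "real \<Rightarrow> real \<Rightarrow> real^'n \<Rightarrow> real^'n \<Rightarrow> real^'n^'n \<Rightarrow> real" where
  "beta_med vX sYX sYW sXW Sig =
     (THE b. \<exists>\<gamma>::real^'n. sYX = b * vX + \<gamma> \<bullet> sXW \<and> sYW = b *\<^sub>R sXW + Sig *v \<gamma>)"

text \<open>k0 = var(X^{perp W1}) = var(X) - cov(X,W1) var(W1)^{-1} cov(W1,X).\<close>
definition k0 :: "real \<Rightarrow> real^'n \<Rightarrow> real^'n^'n \<Rightarrow> real" where
  "k0 vX sXW Sig = vX - sXW \<bullet> (matrix_inv Sig *v sXW)"

definition zX :: "real^'n \<Rightarrow> real^'n \<Rightarrow> real^'n \<Rightarrow> real" where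
  "zX sXW rX c = (rX \<bullet> sXW) * sqrt (1 - (norm c)^2) / (1 + rX \<bullet> c)"

text \<open>The identified set B(rX, rY, c). Row-vector equations of the paper are transposed
  into column-vector form.\<close>
definition Bset ::
  "real \<Rightarrow> real \<Rightarrow> real \<Rightarrow> real^'n \<Rightarrow> real^'n \<Rightarrow> real^'n^'n \<Rightarrow>
   real^'n \<Rightarrow> real^'n \<Rightarrow> real^'n \<Rightarrow> real set" where
  "Bset vY vX sYX sYW sXW Sig rX rY c =
     {b. \<exists>p1 g1 :: real^'n.
        sYX = b * vX + g1 \<bullet> ((Sig + outer c rX + outer rY c + outer rY rX) *v p1)
      \<and> sYW = b *\<^sub>R sXW + (Sig + outer c rY) *v g1
      \<and> sXW = (Sig + outer c rX) *v p1
      \<and> vY > b^2 * vX + g1 \<bullet> ((Sig + outer rY rY + 2 *\<^sub>R outer rY c) *v g1)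
             + 2 * b * (g1 \<bullet> ((Sig + outer c rX + outer rY c + outer rY rX) *v p1))
      \<and> vX > p1 \<bullet> ((Sig + 2 *\<^sub>R outer rX c + outer rX rX) *v p1)
      \<and> 1 > c \<bullet> (matrix_inv Sig *v c)}"

end

theory Submission
  imports Defs
begin

text \<open>The two equations involving g1 are the normal equations of beta_med once
  (I + c r_X') p1 = sigma_{W1,X} is used, and the var(Y) inequality is automatic by positive
  definiteness, so B is {beta_med} or empty. Writing s = p1 + (r_X'p1) c, the var(X)
  inequality reads var(X) > s's + (p1'r_X)^2 (1 - |c|^2), i.e. (p1'r_X)^2 (1 - |c|^2) < k0.
  If r_X'c \<noteq> -1 the equation for p1 is solved by p1 = s - t c with t = r_X's / (1 + r_X'c),
  for which (p1'r_X)^2 (1 - |c|^2) = z_X^2.\<close>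

lemma outer_mult_vector: "outer a b *v p = (b \<bullet> p) *\<^sub>R a"
  by (simp add: vec_eq_iff matrix_vector_mult_def outer_def inner_vec_def sum_distrib_left mult_ac)

lemma outer_zero_left [simp]: "outer 0 b = 0" and outer_zero_right [simp]: "outer a 0 = 0"
  by (simp_all add: outer_def vec_eq_iff)

lemma matrix_inv_mat_1: "matrix_inv (mat 1 :: real^'n^'n) = mat 1"
proof -
  have "\<exists>A'::real^'n^'n. mat 1 ** A' = mat 1 \<and> A' ** mat 1 = mat 1"
    by (intro exI[of _ "mat 1"]) simp
  from someI_ex[OF this] show ?thesis
    unfolding matrix_inv_def by simp
qed

lemma k0_mat_1: "k0 vX s (mat 1) = vX - s \<bullet> s"
  by (simp add: k0_def matrix_inv_mat_1 matrix_vector_mul_lid)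

lemma joint_var_posdef_mat_1_form:
  assumes "joint_var_posdef vY vX sYX sYW s (mat 1)" and "(a, b, v) \<noteq> (0, 0, 0)"
  shows "a^2 * vY + b^2 * vX + 2 * a * b * sYX + 2 * a * (v \<bullet> sYW) + 2 * b * (v \<bullet> s)
           + v \<bullet> v > 0"
  using assms by (simp add: joint_var_posdef_def matrix_vector_mul_lid)

lemma joint_var_posdef_cov_lt:
  assumes "joint_var_posdef vY vX sYX sYW s (mat 1)"
  shows "s \<bullet> s < vX"
  using joint_var_posdef_mat_1_form[OF assms, of 0 1 "-s"] by simp

lemma joint_var_posdef_residual_var:
  assumes "joint_var_posdef vY vX sYX sYW s (mat 1)"
    and "sYX = b * vX + g \<bullet> s" and "sYW = b *\<^sub>R s + g"
  shows "vY > b^2 * vX + g \<bullet> g + 2 * b * (g \<bullet> s)"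
  using joint_var_posdef_mat_1_form[OF assms(1), of 1 "-b" "-g"] assms(2,3)
  by (simp add: inner_add_right inner_commute algebra_simps power2_eq_square)

lemma normal_equations_mat_1_iff:
  "(\<exists>g. sYX = b * vX + g \<bullet> s \<and> sYW = b *\<^sub>R s + g) \<longleftrightarrow> b * (vX - s \<bullet> s) = sYX - sYW \<bullet> s"
proof
  assume "\<exists>g. sYX = b * vX + g \<bullet> s \<and> sYW = b *\<^sub>R s + g"
  then show "b * (vX - s \<bullet> s) = sYX - sYW \<bullet> s"
    by (auto simp: inner_add_left inner_commute algebra_simps)
next
  assume "b * (vX - s \<bullet> s) = sYX - sYW \<bullet> s"
  then show "\<exists>g. sYX = b * vX + g \<bullet> s \<and> sYW = b *\<^sub>R s + g"
    by (intro exI[of _ "sYW - b *\<^sub>R s"]) (simp add: inner_diff_left algebra_simps)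
qed

lemma beta_med_mat_1:
  assumes "s \<bullet> s < vX"
  shows "beta_med vX sYX sYW s (mat 1) = (sYX - sYW \<bullet> s) / (vX - s \<bullet> s)"
proof -
  have "b * (vX - s \<bullet> s) = sYX - sYW \<bullet> s \<longleftrightarrow> b = (sYX - sYW \<bullet> s) / (vX - s \<bullet> s)" for b
    using assms by (simp add: eq_divide_eq)
  then show ?thesis
    unfolding beta_med_def matrix_vector_mul_lid normal_equations_mat_1_iff by simp
qed

lemma quadratic_form_confounded:
  fixes p rX c :: "real^'n"
  assumes "s = p + (rX \<bullet> p) *\<^sub>R c"
  shows "p \<bullet> (p + 2 *\<^sub>R ((c \<bullet> p) *\<^sub>R rX) + (rX \<bullet> p) *\<^sub>R rX)
           = s \<bullet> s + (p \<bullet> rX)^2 * (1 - (norm c)^2)"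
  unfolding assms power2_norm_eq_inner
  by (simp add: inner_add_left inner_add_right inner_commute algebra_simps power2_eq_square)

lemma mem_Bset_mat_1_rY_0_iff:
  "b \<in> Bset vY vX sYX sYW s (mat 1) rX 0 c \<longleftrightarrow>
     (\<exists>p g. sYX = b * vX + g \<bullet> s \<and> sYW = b *\<^sub>R s + g \<and> s = p + (rX \<bullet> p) *\<^sub>R c
        \<and> vY > b^2 * vX + g \<bullet> g + 2 * b * (g \<bullet> s)
        \<and> vX > p \<bullet> (p + 2 *\<^sub>R ((c \<bullet> p) *\<^sub>R rX) + (rX \<bullet> p) *\<^sub>R rX)
        \<and> 1 > c \<bullet> c)"
  unfolding Bset_def mem_Collect_eq
  by (auto simp: matrix_vector_mult_add_rdistrib matrix_vector_mul_lid outer_mult_vector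
      matrix_inv_mat_1 scaleR_matrix_vector_assoc[symmetric])

lemma Bset_mat_1_rY_0:
  assumes pd: "joint_var_posdef vY vX sYX sYW s (mat 1)" and "norm c < 1"
  shows "Bset vY vX sYX sYW s (mat 1) rX 0 c =
     {b. b = beta_med vX sYX sYW s (mat 1) \<and>
        (\<exists>p. (mat 1 + outer c rX) *v p = s \<and> (p \<bullet> rX)^2 * (1 - (norm c)^2) < k0 vX s (mat 1))}"
    (is "_ = {b. b = ?\<beta> \<and> ?Q}")
proof -
  have s_lt: "s \<bullet> s < vX"
    using joint_var_posdef_cov_lt[OF pd] .
  have c_lt: "c \<bullet> c < 1"
    using \<open>norm c < 1\<close> by (simp add: power2_norm_eq_inner[symmetric] abs_square_less_1)
  have normal_iff: "(\<exists>g. sYX = b * vX + g \<bullet> s \<and> sYW = b *\<^sub>R s + g) \<longleftrightarrow> b = ?\<beta>" for b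
    unfolding normal_equations_mat_1_iff using s_lt by (simp add: beta_med_mat_1 eq_divide_eq)
  have confounding: "(mat 1 + outer c rX) *v p = p + (rX \<bullet> p) *\<^sub>R c" for p
    by (simp add: matrix_vector_mult_add_rdistrib matrix_vector_mul_lid outer_mult_vector)
  have var_X_iff: "vX > p \<bullet> (p + 2 *\<^sub>R ((c \<bullet> p) *\<^sub>R rX) + (rX \<bullet> p) *\<^sub>R rX)
      \<longleftrightarrow> (p \<bullet> rX)^2 * (1 - (norm c)^2) < k0 vX s (mat 1)" if "s = p + (rX \<bullet> p) *\<^sub>R c" for p
    unfolding quadratic_form_confounded[OF that] k0_mat_1 by linarith
  show ?thesis
  proof (intro set_eqI iffI)
    fix b assume "b \<in> Bset vY vX sYX sYW s (mat 1) rX 0 c"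
    then obtain p g where "sYX = b * vX + g \<bullet> s" "sYW = b *\<^sub>R s + g" "s = p + (rX \<bullet> p) *\<^sub>R c"
      "vX > p \<bullet> (p + 2 *\<^sub>R ((c \<bullet> p) *\<^sub>R rX) + (rX \<bullet> p) *\<^sub>R rX)"
      unfolding mem_Bset_mat_1_rY_0_iff by blast
    then show "b \<in> {b. b = ?\<beta> \<and> ?Q}"
      using normal_iff var_X_iff confounding by auto
  next
    fix b assume "b \<in> {b. b = ?\<beta> \<and> ?Q}"
    then obtain p where "b = ?\<beta>" "s = p + (rX \<bullet> p) *\<^sub>R c"
      "(p \<bullet> rX)^2 * (1 - (norm c)^2) < k0 vX s (mat 1)"
      using confounding by auto
    moreover obtain g where "sYX = b * vX + g \<bullet> s" "sYW = b *\<^sub>R s + g"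
      using normal_iff \<open>b = ?\<beta>\<close> by blast
    ultimately show "b \<in> Bset vY vX sYX sYW s (mat 1) rX 0 c"
      unfolding mem_Bset_mat_1_rY_0_iff
      using joint_var_posdef_residual_var[OF pd] var_X_iff c_lt by blast
  qed
qed

lemma confounded_solution_zX:
  fixes s rX c :: "real^'n"
  assumes "rX \<bullet> c \<noteq> -1" and "norm c \<le> 1"
  defines "p \<equiv> s - ((rX \<bullet> s) / (1 + rX \<bullet> c)) *\<^sub>R c"
  shows "(mat 1 + outer c rX) *v p = s"
    and "(p \<bullet> rX)^2 * (1 - (norm c)^2) = (zX s rX c)^2"
proof -
  have "1 + rX \<bullet> c \<noteq> 0"
    using assms(1) by (metis add_eq_0_iff)
  then have rX_p: "rX \<bullet> p = (rX \<bullet> s) / (1 + rX \<bullet> c)"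
    by (simp add: p_def inner_diff_right field_simps)
  then show "(mat 1 + outer c rX) *v p = s"
    by (simp add: p_def matrix_vector_mult_add_rdistrib matrix_vector_mul_lid outer_mult_vector)
  have "0 \<le> 1 - (norm c)^2"
    using assms(2) by (simp add: abs_square_le_1)
  then show "(p \<bullet> rX)^2 * (1 - (norm c)^2) = (zX s rX c)^2"
    by (simp add: zX_def inner_commute[of p] rX_p power_divide power_mult_distrib)
qed

theorem mainTheorem20:
  fixes vY vX sYX :: real and sYW sXW rX c :: "real^'n"
  assumes "vX = 1"
    and "joint_var_posdef vY vX sYX sYW sXW (mat 1)"
    and "norm c < 1"
  shows "(Bset vY vX sYX sYW sXW (mat 1) rX 0 c = {beta_med vX sYX sYW sXW (mat 1)}
           \<longleftrightarrow> (\<exists>p1::real^'n. (mat 1 + outer c rX) *v p1 = sXW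
                  \<and> (p1 \<bullet> rX)^2 * (1 - (norm c)^2) < k0 vX sXW (mat 1)))
       \<and> (rX \<bullet> c \<noteq> -1 \<and> (zX sXW rX c)^2 < k0 vX sXW (mat 1)
           \<longrightarrow> Bset vY vX sYX sYW sXW (mat 1) rX 0 c = {beta_med vX sYX sYW sXW (mat 1)})"
proof -
  have "Bset vY vX sYX sYW sXW (mat 1) rX 0 c = {beta_med vX sYX sYW sXW (mat 1)}
      \<longleftrightarrow> (\<exists>p1::real^'n. (mat 1 + outer c rX) *v p1 = sXW
                  \<and> (p1 \<bullet> rX)^2 * (1 - (norm c)^2) < k0 vX sXW (mat 1))"
    unfolding Bset_mat_1_rY_0[OF assms(2,3)] by auto
  moreover have "\<exists>p1::real^'n. (mat 1 + outer c rX) *v p1 = sXW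
                  \<and> (p1 \<bullet> rX)^2 * (1 - (norm c)^2) < k0 vX sXW (mat 1)"
    if "rX \<bullet> c \<noteq> -1" and "(zX sXW rX c)^2 < k0 vX sXW (mat 1)"
    using confounded_solution_zX[OF that(1), of sXW] assms(3) that(2) by auto
  ultimately show ?thesis by blast
qed

end
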